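(* Let $n\geq1$ and $1\leq k\leq n$. Then there exists $\eta\in\Omega$ with $\eta\neq\eta_k$ such that $f_k(m_{J_\eta})=f_k(m_{J_{\eta_k}})$.
   Context: $f_k(v)=kv_1+(1-k)v_2$. $\Lambda_{3,n}=\{\beta\in\mathbb N^3:1\leq|\beta|\leq n\}$; $A_n=\begin{pmatrix}1&1&n\\0&1&n+1\end{pmatrix}$; for $J\subset\Lambda_{3,n}$, $m_J=\sum_{\beta\in J}A_n\beta$. $\Omega$ is the set of $\eta=(z,d_0,\ldots,d_r)$ with $z\in\{0,1\}$, $d_0=0$, $d_i\geq1$ ($1\leq i\leq r$), $\sum d_i=n$. For $j\in\{1,\ldots,n\}$, $t$ unique with $\sum_{i<t}d_i<j\leq\sum_{i\leq t}d_i$, $c=j-\sum_{i<t}d_i$; $v_{j,\eta}=(\sum_{i\text{ odd},i<t}d_i+c,0)$ if $z=1,t$ odd; $(0,\sum_{i\text{ even},i<t}d_i+c)$ if $z=1,t$ even; $(0,\sum_{i\text{ odd},i<t}d_i+c)$ if $z=0,t$ odd; $(\sum_{i\text{ even},i<t}d_i+c,0)$ if $z=0,t$ even. $T_{j,\eta}=\{v_{j,\eta}+p(1,1):0\leq p\leq n-j\}$, $T_{0,\eta}=\{(p,p):1\leq p\leq n\}$, $r_{j,\eta}=n\pi_2(v_{j,\eta})$, $T'_\eta=T_{0,\eta}\cup\bigcup_{j=1}^n(T_{j,\eta}+r_{j,\eta}(1,1))$, and $J_\eta=\{\beta\in\Lambda_{3,n}:A_n\beta\in T'_\eta\}$ (which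 $\beta\mapsto A_n\beta$ maps bijectively onto $T'_\eta$). $\eta_k$: $z_k=1$ if $k\leq n+1-k$, else $0$; $d_{k,0}=0$; for $l\geq1$, $O_l=\sum_{j\text{ odd},j\leq l-1}d_{k,j}$, $E_l=\sum_{j\text{ even},j\leq l-1}d_{k,j}$; $t_l=\max\{m\in\mathbb N:mk\leq(E_l+1)(n+1-k)\}$ ($z_k=1$, $l$ odd), $\max\{m:m(n+1-k)\leq(O_l+1)k\}$ ($z_k=1$, $l$ even), $\max\{m:m(n+1-k)\leq(E_l+1)k\}$ ($z_k=0$, $l$ odd), $\max\{m:mk\leq(O_l+1)(n+1-k)\}$ ($z_k=0$, $l$ even); $s_1=0$, $s_l=O_l$ (odd $l>1$), $s_l=E_l$ (even $l$); $d_{k,l}=\min\{n-\sum_{j<l}d_{k,j},t_l-s_l\}$, stopping at first $r$ with $\sum_{j\leq r}d_{k,j}=n$; $\eta_k=(z_k,d_{k,0},\ldots,d_{k,r})\in\Omega$. *)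

theory Defs
  imports Main
begin

definition fk :: "nat \<Rightarrow> int \<times> int \<Rightarrow> int" where
  "fk k v = int k * fst v + (1 - int k) * snd v"

definition Lambda3 :: "nat \<Rightarrow> (nat \<times> nat \<times> nat) set" where
  "Lambda3 n = {(a, b, c). 1 \<le> a + b + c \<and> a + b + c \<le> n}"

text \<open>\<open>A_n \<beta>\<close> for \<open>A_n = ((1,1,n),(0,1,n+1))\<close>.\<close>
definition An :: "nat \<Rightarrow> nat \<times> nat \<times> nat \<Rightarrow> int \<times> int" where
  "An n \<beta> = (case \<beta> of (a, b, c) \<Rightarrow> (int (a + b + n * c), int (b + (n + 1) * c)))"

definition mJ :: "nat \<Rightarrow> (nat \<times> nat \<times> nat) set \<Rightarrow> int \<times> int" where
  "mJ n J = ((\<Sum>\<beta>\<in>J. fst (An n \<beta>)), (\<Sum>\<beta>\<in>J. snd (An n \<beta>)))"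

text \<open>\<open>\<eta> = (z, d_0, \<dots>, d_r)\<close> is represented as the pair \<open>(z, [d_0, \<dots>, d_r])\<close>.\<close>
definition Omega :: "nat \<Rightarrow> (nat \<times> nat list) set" where
  "Omega n = {(z, ds). z \<in> {0, 1} \<and> ds \<noteq> [] \<and> ds ! 0 = 0 \<and>
                (\<forall>i. 1 \<le> i \<and> i < length ds \<longrightarrow> 1 \<le> ds ! i) \<and> sum_list ds = n}"

definition psum :: "nat list \<Rightarrow> nat \<Rightarrow> nat" where
  "psum ds t = (\<Sum>i<t. ds ! i)"

definition oddsum :: "nat list \<Rightarrow> nat \<Rightarrow> nat" where
  "oddsum ds t = (\<Sum>i\<in>{i. i < t \<and> odd i}. ds ! i)"

definition evensum :: "nat list \<Rightarrow> nat \<Rightarrow> nat" where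
  "evensum ds t = (\<Sum>i\<in>{i. i < t \<and> even i}. ds ! i)"

definition tidx :: "nat list \<Rightarrow> nat \<Rightarrow> nat" where
  "tidx ds j = (THE t. t < length ds \<and> psum ds t < j \<and> j \<le> psum ds (Suc t))"

definition vje :: "nat \<Rightarrow> nat \<times> nat list \<Rightarrow> int \<times> int" where
  "vje j \<eta> = (case \<eta> of (z, ds) \<Rightarrow>
     (let t = tidx ds j; c = j - psum ds t in
      if z = 1 \<and> odd t then (int (oddsum ds t + c), 0)
      else if z = 1 \<and> even t then (0, int (evensum ds t + c))
      else if z = 0 \<and> odd t then (0, int (oddsum ds t + c))
      else (int (evensum ds t + c), 0)))"

definition T0 :: "nat \<Rightarrow> (int \<times> int) set" where
  "T0 n = {(int p, int p) | p. 1 \<le> p \<and> p \<le> n}"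

definition Tj :: "nat \<Rightarrow> nat \<Rightarrow> nat \<times> nat list \<Rightarrow> (int \<times> int) set" where
  "Tj n j \<eta> = {(fst (vje j \<eta>) + int p, snd (vje j \<eta>) + int p) | p. p \<le> n - j}"

definition rje :: "nat \<Rightarrow> nat \<Rightarrow> nat \<times> nat list \<Rightarrow> int" where
  "rje n j \<eta> = int n * snd (vje j \<eta>)"

definition Tprime :: "nat \<Rightarrow> nat \<times> nat list \<Rightarrow> (int \<times> int) set" where
  "Tprime n \<eta> = T0 n \<union>
     (\<Union>j\<in>{1..n}. (\<lambda>x. (fst x + rje n j \<eta>, snd x + rje n j \<eta>)) ` Tj n j \<eta>)"

definition Jeta :: "nat \<Rightarrow> nat \<times> nat list \<Rightarrow> (nat \<times> nat \<times> nat) set" where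
  "Jeta n \<eta> = {\<beta> \<in> Lambda3 n. An n \<beta> \<in> Tprime n \<eta>}"

definition zk :: "nat \<Rightarrow> nat \<Rightarrow> nat" where
  "zk n k = (if k \<le> n + 1 - k then 1 else 0)"

primrec dlist :: "nat \<Rightarrow> nat \<Rightarrow> nat \<Rightarrow> nat list" where
  "dlist n k 0 = [0]"
| "dlist n k (Suc l) =
     (let ds = dlist n k l; L = Suc l;
          Os = oddsum ds L; E = evensum ds L; z = zk n k;
          t = (if z = 1 \<and> odd L then (GREATEST m::nat. m * k \<le> (E + 1) * (n + 1 - k))
               else if z = 1 \<and> even L then (GREATEST m::nat. m * (n + 1 - k) \<le> (Os + 1) * k)
               else if z = 0 \<and> odd L then (GREATEST m::nat. m * (n + 1 - k) \<le> (E + 1) * k)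
               else (GREATEST m::nat. m * k \<le> (Os + 1) * (n + 1 - k)));
          s = (if L = 1 then 0 else if odd L then Os else E);
          d = min (n - sum_list ds) (t - s)
      in ds @ [d])"

definition dk :: "nat \<Rightarrow> nat \<Rightarrow> nat \<Rightarrow> nat" where
  "dk n k l = dlist n k l ! l"

definition rk :: "nat \<Rightarrow> nat \<Rightarrow> nat" where
  "rk n k = (LEAST r. (\<Sum>j\<le>r. dk n k j) = n)"

definition etak :: "nat \<Rightarrow> nat \<Rightarrow> nat \<times> nat list" where
  "etak n k = (zk n k, map (dk n k) [0..<Suc (rk n k)])"

end

theory Submission
  imports Defs
begin

text \<open>
  The points of \<open>T'_\<eta>\<close> other than the one coming from \<open>j = n\<close> depend only on the
  \<open>v_{j,\<eta>}\<close> with \<open>j < n\<close>; the remaining one is \<open>v_{n,\<eta>}\<close>, an axis point, shifted along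
  the diagonal. Moving the index \<open>n\<close> into a block of the other parity (split off a new last
  block of size one, merge a last block of size one into its predecessor, or flip \<open>z\<close> when
  \<open>n = 1\<close>) keeps every \<open>v_{j,\<eta>}\<close> with \<open>j < n\<close> and moves \<open>v_{n,\<eta>}\<close> from \<open>S\<close> on one axis to
  \<open>S' + 1\<close> on the other, where \<open>S\<close> and \<open>S'\<close> are the totals of the blocks of the parity of the
  last block and of the other parity. Neither point has the diagonal offset of a point of the
  rest of \<open>T'\<close>, so \<open>J\<close> changes by exactly one lattice point.

  The greedy construction of \<open>\<eta>_k\<close> keeps the two running totals on the staircase of the line
  through the origin determined by \<open>k\<close> and \<open>n + 1 - k\<close>, and it stops with \<open>S\<close> and \<open>S' + 1\<close>
  equal to these two numbers, each on the axis whose \<open>f_k\<close>-weight is the other one. Hence both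
  shifted points have \<open>f_k\<close>-value \<open>k (n + 1 - k)\<close>.
\<close>

section \<open>Block sums and the position of an index\<close>

definition parity_sum :: "nat list \<Rightarrow> bool \<Rightarrow> nat \<Rightarrow> nat" where
  "parity_sum ds p t = (\<Sum>i | i < t \<and> odd i = p. ds ! i)"

lemma oddsum_eq_parity_sum: "oddsum ds t = parity_sum ds True t"
  unfolding oddsum_def parity_sum_def by simp

lemma evensum_eq_parity_sum: "evensum ds t = parity_sum ds False t"
  unfolding evensum_def parity_sum_def by simp

lemma parity_sum_0 [simp]: "parity_sum ds p 0 = 0"
  unfolding parity_sum_def by simp

lemma parity_sum_Suc:
  "parity_sum ds p (Suc t) = parity_sum ds p t + (if odd t = p then ds ! t else 0)"
proof -
  have "{i. i < Suc t \<and> odd i = p} =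
      (if odd t = p then insert t {i. i < t \<and> odd i = p} else {i. i < t \<and> odd i = p})"
    by (auto simp: less_Suc_eq)
  then show ?thesis
    unfolding parity_sum_def by simp
qed

lemma parity_sum_mono: "t \<le> u \<Longrightarrow> parity_sum ds p t \<le> parity_sum ds p u"
  by (induction u rule: dec_induct) (auto simp: parity_sum_Suc)

lemma parity_sum_cong: "(\<And>i. i < t \<Longrightarrow> ds' ! i = ds ! i) \<Longrightarrow> parity_sum ds' p t = parity_sum ds p t"
  unfolding parity_sum_def by (rule sum.cong) auto

lemma psum_0 [simp]: "psum ds 0 = 0"
  unfolding psum_def by simp

lemma psum_Suc: "psum ds (Suc t) = psum ds t + ds ! t"
  unfolding psum_def by simp

lemma psum_eq_parity_sums: "psum ds t = parity_sum ds True t + parity_sum ds False t"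
  by (induction t) (auto simp: psum_Suc parity_sum_Suc)

lemma psum_mono: "t \<le> u \<Longrightarrow> psum ds t \<le> psum ds u"
  unfolding psum_def by (rule sum_mono2) auto

lemma psum_cong: "(\<And>i. i < t \<Longrightarrow> ds' ! i = ds ! i) \<Longrightarrow> psum ds' t = psum ds t"
  unfolding psum_def by (rule sum.cong) auto

lemma sum_list_eq_psum: "sum_list ds = psum ds (length ds)"
  unfolding psum_def by (simp add: sum_list_sum_nth atLeast0LessThan)

lemma tidx_eqI:
  assumes "t < length ds" "psum ds t < j" "j \<le> psum ds (Suc t)"
  shows "tidx ds j = t"
  unfolding tidx_def
proof (rule the_equality)
  fix u assume u: "u < length ds \<and> psum ds u < j \<and> j \<le> psum ds (Suc u)"
  show "u = t"
  proof (rule ccontr)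
    assume "u \<noteq> t"
    then consider "Suc u \<le> t" | "Suc t \<le> u" by linarith
    then show False
      by cases (use u assms psum_mono[of "Suc u" t ds] psum_mono[of "Suc t" u ds] in linarith)+
  qed
qed (use assms in simp)

lemma exists_block_containing:
  "0 < j \<Longrightarrow> j \<le> psum ds m \<Longrightarrow> \<exists>t<m. psum ds t < j \<and> j \<le> psum ds (Suc t)"
proof (induction m)
  case (Suc m)
  show ?case
  proof (cases "j \<le> psum ds m")
    case True
    then show ?thesis using Suc less_SucI by blast
  next
    case False
    then show ?thesis using Suc.prems by (intro exI[of _ m]) auto
  qed
qed simp

lemma tidx_bounds:
  assumes "1 \<le> j" "j \<le> sum_list ds"
  shows "tidx ds j < length ds" "psum ds (tidx ds j) < j" "j \<le> psum ds (Suc (tidx ds j))"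
proof -
  obtain t where t: "t < length ds" "psum ds t < j" "j \<le> psum ds (Suc t)"
    using exists_block_containing[of j ds "length ds"] assms by (auto simp: sum_list_eq_psum)
  moreover have "tidx ds j = t"
    using t by (rule tidx_eqI)
  ultimately show "tidx ds j < length ds" "psum ds (tidx ds j) < j" "j \<le> psum ds (Suc (tidx ds j))"
    by simp_all
qed

lemma tidx_le:
  assumes "1 \<le> j" "j \<le> sum_list ds" "j \<le> psum ds (Suc m)"
  shows "tidx ds j \<le> m"
proof (rule ccontr)
  assume "\<not> tidx ds j \<le> m"
  then have "psum ds (Suc m) \<le> psum ds (tidx ds j)" by (simp add: psum_mono)
  then show False using tidx_bounds(2)[OF assms(1,2)] assms(3) by linarith
qed

definition axis_point :: "bool \<Rightarrow> nat \<Rightarrow> int \<times> int" where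
  "axis_point b s = (if b then (int s, 0) else (0, int s))"

definition axis_coord :: "nat list \<Rightarrow> nat \<Rightarrow> nat" where
  "axis_coord ds j = parity_sum ds (odd (tidx ds j)) (tidx ds j) + (j - psum ds (tidx ds j))"

lemma vje_eq_axis_point:
  "z \<in> {0, 1} \<Longrightarrow> vje j (z, ds) = axis_point ((z = 1) = odd (tidx ds j)) (axis_coord ds j)"
  unfolding vje_def axis_point_def axis_coord_def Let_def
  by (auto simp: oddsum_eq_parity_sum evensum_eq_parity_sum)

lemma Omega_iff:
  "(z, ds) \<in> Omega n \<longleftrightarrow>
    z \<in> {0, 1} \<and> (\<exists>bs. ds = 0 # bs \<and> (\<forall>b\<in>set bs. 1 \<le> b) \<and> sum_list bs = n)"
proof -
  have "(ds \<noteq> [] \<and> ds ! 0 = 0 \<and> (\<forall>i. 1 \<le> i \<and> i < length ds \<longrightarrow> 1 \<le> ds ! i) \<and> sum_list ds = n) \<longleftrightarrow>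
      (\<exists>bs. ds = 0 # bs \<and> (\<forall>b\<in>set bs. 1 \<le> b) \<and> sum_list bs = n)"
  proof (cases ds)
    case (Cons d bs)
    have "(\<forall>i. 1 \<le> i \<and> i < length ds \<longrightarrow> 1 \<le> ds ! i) \<longleftrightarrow> (\<forall>b\<in>set bs. 1 \<le> b)"
      unfolding Cons all_set_conv_all_nth by (auto simp: nth_Cons' dest: spec[of _ "Suc _"])
    then show ?thesis using Cons by auto
  qed simp
  then show ?thesis unfolding Omega_def by simp
qed

lemma Omega_last_block:
  assumes "(z, ds) \<in> Omega n" "length ds = Suc r" "1 \<le> n"
  shows "psum ds (Suc r) = n" "1 \<le> r" "1 \<le> ds ! r"
proof -
  show sum: "psum ds (Suc r) = n"
    using assms by (simp add: Omega_def sum_list_eq_psum)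
  show "1 \<le> r"
  proof (rule ccontr)
    assume "\<not> 1 \<le> r"
    then have "r = 0" by simp
    then show False using assms sum by (simp add: Omega_def psum_Suc)
  qed
  then show "1 \<le> ds ! r"
    using assms by (simp add: Omega_def)
qed

lemma tidx_last:
  assumes "(z, ds) \<in> Omega n" "length ds = Suc r" "1 \<le> n"
  shows "tidx ds n = r"
  using Omega_last_block[OF assms] psum_Suc[of ds r] assms(2) by (intro tidx_eqI) auto

lemma vje_last:
  assumes "(z, ds) \<in> Omega n" "length ds = Suc r" "1 \<le> n"
  shows "vje n (z, ds) = axis_point ((z = 1) = odd r) (parity_sum ds (odd r) (Suc r))"
proof -
  have "axis_coord ds n = parity_sum ds (odd r) (Suc r)"
    using Omega_last_block[OF assms] unfolding axis_coord_def tidx_last[OF assms]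
    by (simp add: parity_sum_Suc psum_Suc)
  moreover have "z \<in> {0, 1}"
    using assms(1) by (simp add: Omega_def)
  ultimately show ?thesis
    by (simp add: vje_eq_axis_point tidx_last[OF assms])
qed

lemma axis_coord_bounds:
  assumes \<eta>: "(z, ds) \<in> Omega n" "length ds = Suc r" and j: "1 \<le> j" "j < n"
  defines "t \<equiv> tidx ds j"
  shows "1 \<le> axis_coord ds j"
    and "odd t = odd r \<Longrightarrow> axis_coord ds j < parity_sum ds (odd r) (Suc r)"
    and "odd t \<noteq> odd r \<Longrightarrow> axis_coord ds j \<le> parity_sum ds (even r) (Suc r)"
proof -
  have "1 \<le> n" using j by simp
  note last = Omega_last_block[OF \<eta> this]
  have sum: "sum_list ds = n"
    using \<eta> by (simp add: Omega_def)
  have t: "t \<le> r" "psum ds t < j" "j \<le> psum ds (Suc t)"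
    using tidx_bounds[of j ds] j sum \<eta>(2) unfolding t_def by auto
  have coord: "axis_coord ds j = parity_sum ds (odd t) t + (j - psum ds t)"
    unfolding axis_coord_def t_def ..
  have upto_t: "axis_coord ds j \<le> parity_sum ds (odd t) (Suc t)"
    using t unfolding coord by (simp add: parity_sum_Suc psum_Suc)
  show "1 \<le> axis_coord ds j"
    using t unfolding coord by simp
  have "parity_sum ds (odd t) (Suc t) \<le> parity_sum ds (odd t) (Suc r)"
    using t(1) by (intro parity_sum_mono) simp
  with upto_t show "odd t \<noteq> odd r \<Longrightarrow> axis_coord ds j \<le> parity_sum ds (even r) (Suc r)"
    by (cases "odd t") auto
  assume same: "odd t = odd r"
  show "axis_coord ds j < parity_sum ds (odd r) (Suc r)"
  proof (cases "t = r")
    case True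
    then show ?thesis
      using t j last unfolding coord by (simp add: parity_sum_Suc psum_Suc)
  next
    case False
    then have "parity_sum ds (odd r) (Suc t) \<le> parity_sum ds (odd r) r"
      using t by (simp add: parity_sum_mono)
    then show ?thesis
      using upto_t same last by (simp add: parity_sum_Suc)
  qed
qed

section \<open>Lattice points of \<open>T'\<close>\<close>

definition lift :: "nat \<Rightarrow> int \<times> int \<Rightarrow> int \<times> int" where
  "lift n v = (fst v + int n * snd v, snd v + int n * snd v)"

definition diag_offset :: "int \<times> int \<Rightarrow> int" where
  "diag_offset v = snd v - fst v"

definition Tprime_rest :: "nat \<Rightarrow> nat \<times> nat list \<Rightarrow> (int \<times> int) set" where
  "Tprime_rest n \<eta> = T0 n \<union>
     (\<Union>j\<in>{1..<n}. (\<lambda>x. (fst x + rje n j \<eta>, snd x + rje n j \<eta>)) ` Tj n j \<eta>)"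

lemma Tprime_eq_insert_last:
  "1 \<le> n \<Longrightarrow> Tprime n \<eta> = insert (lift n (vje n \<eta>)) (Tprime_rest n \<eta>)"
proof -
  assume "1 \<le> n"
  then have "{1..n} = insert n {1..<n}" by auto
  moreover have "Tj n n \<eta> = {vje n \<eta>}" unfolding Tj_def by auto
  ultimately show ?thesis unfolding Tprime_def Tprime_rest_def lift_def rje_def by auto
qed

lemma diag_offset_lift [simp]: "diag_offset (lift n v) = diag_offset v"
  unfolding diag_offset_def lift_def by simp

lemma diag_offset_Tprime_rest:
  "x \<in> Tprime_rest n \<eta> \<Longrightarrow> diag_offset x = 0 \<or> (\<exists>j\<in>{1..<n}. diag_offset x = diag_offset (vje j \<eta>))"
  unfolding Tprime_rest_def T0_def Tj_def diag_offset_def by auto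

lemma lift_notin_Tprime_rest:
  assumes "diag_offset v \<noteq> 0" "\<And>j. j \<in> {1..<n} \<Longrightarrow> diag_offset (vje j \<eta>) \<noteq> diag_offset v"
  shows "lift n v \<notin> Tprime_rest n \<eta>"
  using assms diag_offset_Tprime_rest[of "lift n v" n \<eta>] by force

lemma Tprime_rest_cong:
  "(\<And>j. j \<in> {1..<n} \<Longrightarrow> vje j \<eta>' = vje j \<eta>) \<Longrightarrow> Tprime_rest n \<eta>' = Tprime_rest n \<eta>"
  unfolding Tprime_rest_def Tj_def rje_def by simp

lemma An_inj_on: "inj_on (An n) (Lambda3 n)"
proof (rule inj_onI)
  fix \<beta> \<beta>' assume mem: "\<beta> \<in> Lambda3 n" "\<beta>' \<in> Lambda3 n" and eq: "An n \<beta> = An n \<beta>'"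
  obtain a b c a' b' c' where \<beta>: "\<beta> = (a, b, c)" "\<beta>' = (a', b', c')"
    by (cases \<beta>, cases \<beta>') auto
  have x: "a + b + n * c = a' + b' + n * c'" and y: "b + (n + 1) * c = b' + (n + 1) * c'"
    using eq unfolding \<beta> An_def by (simp_all only: prod.case prod.inject of_nat_eq_iff)
  have "b < n + 1" "b' < n + 1"
    using mem unfolding \<beta> Lambda3_def by auto
  moreover have "(u + (n + 1) * w) div (n + 1) = w \<and> (u + (n + 1) * w) mod (n + 1) = u"
    if "u < n + 1" for u w
    using that by (simp del: add_Suc_right One_nat_def)
  ultimately have "c = c' \<and> b = b'"
    using y by metis
  with x show "\<beta> = \<beta>'"
    unfolding \<beta> by simp
qed

lemma finite_Lambda3: "finite (Lambda3 n)"
proof (rule finite_subset)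
  show "Lambda3 n \<subseteq> {..n} \<times> {..n} \<times> {..n}"
    unfolding Lambda3_def by auto
qed simp

lemma fk_mJ_Jeta: "fk k (mJ n (Jeta n \<eta>)) = (\<Sum>x \<in> Tprime n \<eta> \<inter> An n ` Lambda3 n. fk k x)"
proof -
  have inj: "inj_on (An n) (Jeta n \<eta>)"
    using An_inj_on by (rule inj_on_subset) (auto simp: Jeta_def)
  have "fk k (mJ n (Jeta n \<eta>)) = (\<Sum>\<beta>\<in>Jeta n \<eta>. fk k (An n \<beta>))"
    unfolding fk_def mJ_def by (simp add: sum_distrib_left sum.distrib)
  also have "\<dots> = (\<Sum>x \<in> An n ` Jeta n \<eta>. fk k x)"
    using inj by (simp add: sum.reindex)
  also have "An n ` Jeta n \<eta> = Tprime n \<eta> \<inter> An n ` Lambda3 n"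
    unfolding Jeta_def by auto
  finally show ?thesis .
qed

lemma lift_axis_point_in_image:
  assumes "1 \<le> s" "s \<le> n"
  shows "lift n (axis_point b s) \<in> An n ` Lambda3 n"
proof
  let ?\<beta> = "if b then (s, 0, 0) else (0, 0, s)"
  show "?\<beta> \<in> Lambda3 n"
    using assms unfolding Lambda3_def by simp
  show "lift n (axis_point b s) = An n ?\<beta>"
    unfolding lift_def axis_point_def An_def by (simp add: algebra_simps)
qed

lemma fk_mJ_Jeta_split_last:
  assumes "1 \<le> n" "lift n (vje n \<eta>) \<in> An n ` Lambda3 n" "lift n (vje n \<eta>) \<notin> Tprime_rest n \<eta>"
  shows "fk k (mJ n (Jeta n \<eta>)) =
    (\<Sum>x \<in> Tprime_rest n \<eta> \<inter> An n ` Lambda3 n. fk k x) + fk k (lift n (vje n \<eta>))"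
proof -
  have "finite (Tprime_rest n \<eta> \<inter> An n ` Lambda3 n)"
    using finite_Lambda3 by simp
  then show ?thesis
    unfolding fk_mJ_Jeta Tprime_eq_insert_last[OF assms(1)] using assms(2,3)
    by (simp add: Int_insert_left)
qed

lemma diag_offset_axis_point: "diag_offset (axis_point b s) = (if b then - int s else int s)"
  unfolding diag_offset_def axis_point_def by simp

lemma parity_sums_last:
  assumes "(z, ds) \<in> Omega n" "length ds = Suc r" "1 \<le> n"
  shows "parity_sum ds (odd r) (Suc r) + parity_sum ds (even r) (Suc r) = n"
    and "1 \<le> parity_sum ds (odd r) (Suc r)"
proof -
  show "parity_sum ds (odd r) (Suc r) + parity_sum ds (even r) (Suc r) = n"
    using Omega_last_block(1)[OF assms] psum_eq_parity_sums[of ds "Suc r"] by (cases "odd r") auto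
  show "1 \<le> parity_sum ds (odd r) (Suc r)"
    using Omega_last_block(3)[OF assms] by (simp add: parity_sum_Suc)
qed

lemma diag_offset_vje_fresh:
  assumes \<eta>: "(z, ds) \<in> Omega n" "length ds = Suc r" and j: "1 \<le> j" "j < n"
  defines "b \<equiv> (z = 1) = odd r"
  shows "diag_offset (vje j (z, ds)) \<notin>
    {0, diag_offset (axis_point b (parity_sum ds (odd r) (Suc r))),
        diag_offset (axis_point (\<not> b) (parity_sum ds (even r) (Suc r) + 1))}"
proof -
  have "z \<in> {0, 1}"
    using \<eta>(1) by (simp add: Omega_def)
  then have v: "vje j (z, ds) = axis_point ((z = 1) = odd (tidx ds j)) (axis_coord ds j)"
    by (rule vje_eq_axis_point)
  note bounds = axis_coord_bounds[OF \<eta> j]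
  show ?thesis
    unfolding v diag_offset_axis_point b_def
    using bounds by (cases "odd (tidx ds j) = odd r") auto
qed

lemma fk_mJ_Jeta_change_last:
  assumes \<eta>: "(z, ds) \<in> Omega n" "length ds = Suc r" "1 \<le> n"
    and same: "\<And>j. j \<in> {1..<n} \<Longrightarrow> vje j \<eta>' = vje j (z, ds)"
    and new: "vje n \<eta>' = axis_point ((z = 1) \<noteq> odd r) (parity_sum ds (even r) (Suc r) + 1)"
  shows "fk k (mJ n (Jeta n \<eta>')) - fk k (mJ n (Jeta n (z, ds))) =
    fk k (lift n (vje n \<eta>')) - fk k (lift n (vje n (z, ds)))"
proof -
  note sums = parity_sums_last[OF \<eta>]
  note old = vje_last[OF \<eta>]
  note fresh = diag_offset_vje_fresh[OF \<eta>(1,2)]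
  have rest: "Tprime_rest n \<eta>' = Tprime_rest n (z, ds)"
    using same by (rule Tprime_rest_cong)
  have "fk k (mJ n (Jeta n (z, ds))) =
      (\<Sum>x \<in> Tprime_rest n (z, ds) \<inter> An n ` Lambda3 n. fk k x) + fk k (lift n (vje n (z, ds)))"
  proof (rule fk_mJ_Jeta_split_last[OF \<eta>(3)])
    show "lift n (vje n (z, ds)) \<in> An n ` Lambda3 n"
      unfolding old using sums by (intro lift_axis_point_in_image) auto
    show "lift n (vje n (z, ds)) \<notin> Tprime_rest n (z, ds)"
      unfolding old using sums fresh by (intro lift_notin_Tprime_rest) (auto simp: diag_offset_axis_point)
  qed
  moreover have "fk k (mJ n (Jeta n \<eta>')) =
      (\<Sum>x \<in> Tprime_rest n \<eta>' \<inter> An n ` Lambda3 n. fk k x) + fk k (lift n (vje n \<eta>'))"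
  proof (rule fk_mJ_Jeta_split_last[OF \<eta>(3)])
    show "lift n (vje n \<eta>') \<in> An n ` Lambda3 n"
      unfolding new using sums by (intro lift_axis_point_in_image) auto
    show "lift n (vje n \<eta>') \<notin> Tprime_rest n \<eta>'"
      unfolding new rest using same fresh
      by (intro lift_notin_Tprime_rest) (auto simp: diag_offset_axis_point)
  qed
  ultimately show ?thesis
    unfolding rest by simp
qed

section \<open>Moving the index \<open>n\<close> to the other parity class\<close>

lemma vje_cong_prefix:
  assumes j: "1 \<le> j" "j \<le> sum_list ds"
    and len: "tidx ds j < length ds'"
    and prefix: "\<And>i. i < tidx ds j \<Longrightarrow> ds' ! i = ds ! i"
    and upto: "j \<le> psum ds' (Suc (tidx ds j))"
  shows "vje j (z, ds') = vje j (z, ds)"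
proof -
  define t where "t = tidx ds j"
  have psum_t: "psum ds' t = psum ds t"
    using prefix unfolding t_def by (rule psum_cong)
  have "t < length ds'" "psum ds' t < j" "j \<le> psum ds' (Suc t)"
    using len tidx_bounds(2)[OF j] upto psum_t by (simp_all add: t_def)
  then have "tidx ds' j = t"
    by (rule tidx_eqI)
  moreover have "oddsum ds' t = oddsum ds t" "evensum ds' t = evensum ds t"
    unfolding oddsum_eq_parity_sum evensum_eq_parity_sum t_def
    using parity_sum_cong[OF prefix] by simp_all
  ultimately show ?thesis
    unfolding vje_def Let_def prod.case t_def[symmetric] by (simp add: psum_t)
qed

lemma psum_append_length: "psum (pre @ xs) (length pre) = sum_list pre"
  by (simp add: psum_cong[of "length pre" "pre @ xs" pre] nth_append sum_list_eq_psum)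

lemma split_last_block:
  assumes \<eta>: "(z, pre @ [d]) \<in> Omega n" "length pre = r" "2 \<le> d"
  defines "ds' \<equiv> pre @ [d - 1, 1]"
  shows "(z, ds') \<in> Omega n"
    and "\<And>j. j \<in> {1..<n} \<Longrightarrow> vje j (z, ds') = vje j (z, pre @ [d])"
    and "vje n (z, ds') = axis_point ((z = 1) \<noteq> odd r) (parity_sum (pre @ [d]) (even r) (Suc r) + 1)"
proof -
  show \<eta>': "(z, ds') \<in> Omega n"
    using \<eta> unfolding Omega_iff ds'_def by (cases pre) auto
  have n: "1 \<le> n" and sum: "sum_list (pre @ [d]) = n"
    using \<eta> by (auto simp: Omega_def)
  have prefix: "\<And>i. i < r \<Longrightarrow> ds' ! i = (pre @ [d]) ! i"
    using \<eta>(2) unfolding ds'_def by (simp add: nth_append)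
  show "vje j (z, ds') = vje j (z, pre @ [d])" if "j \<in> {1..<n}" for j
  proof (rule vje_cong_prefix)
    from that have j: "1 \<le> j" "j < n" by simp_all
    let ?t = "tidx (pre @ [d]) j"
    have t: "?t \<le> r" "j \<le> psum (pre @ [d]) (Suc ?t)"
      using tidx_bounds[of j "pre @ [d]"] j sum \<eta>(2) by auto
    show "1 \<le> j" "j \<le> sum_list (pre @ [d])" "?t < length ds'"
      using j sum t \<eta>(2) by (auto simp: ds'_def)
    show "ds' ! i = (pre @ [d]) ! i" if "i < ?t" for i
      using that t prefix by simp
    show "j \<le> psum ds' (Suc ?t)"
    proof (cases "?t = r")
      case True
      have "psum ds' (Suc r) = n - 1"
        using psum_append_length[of pre] \<eta>(2,3) sum by (simp add: psum_Suc ds'_def nth_append)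
      then have "j \<le> psum ds' (Suc r)" using j by linarith
      then show ?thesis using True by simp
    next
      case False
      have "psum ds' (Suc ?t) = psum (pre @ [d]) (Suc ?t)"
        using False t(1) prefix by (intro psum_cong) simp
      then show ?thesis
        using t(2) by simp
    qed
  qed
  have "vje n (z, ds') = axis_point ((z = 1) = odd (Suc r)) (parity_sum ds' (odd (Suc r)) (Suc (Suc r)))"
    using \<eta>' \<eta>(2) n by (intro vje_last) (simp_all add: ds'_def)
  moreover have "parity_sum ds' (odd (Suc r)) (Suc (Suc r)) = parity_sum (pre @ [d]) (even r) (Suc r) + 1"
    using \<eta>(2) parity_sum_cong[OF prefix, where p = "even r"]
    by (simp add: parity_sum_Suc ds'_def nth_append)
  ultimately show "vje n (z, ds') = axis_point ((z = 1) \<noteq> odd r) (parity_sum (pre @ [d]) (even r) (Suc r) + 1)"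
    by simp
qed

lemma merge_last_block:
  assumes \<eta>: "(z, pre @ [e, 1]) \<in> Omega n" "length pre = q" "1 \<le> q"
  defines "ds' \<equiv> pre @ [e + 1]"
  shows "(z, ds') \<in> Omega n"
    and "\<And>j. j \<in> {1..<n} \<Longrightarrow> vje j (z, ds') = vje j (z, pre @ [e, 1])"
    and "vje n (z, ds') =
      axis_point ((z = 1) \<noteq> odd (Suc q)) (parity_sum (pre @ [e, 1]) (even (Suc q)) (Suc (Suc q)) + 1)"
proof -
  let ?ds = "pre @ [e, 1]"
  show \<eta>': "(z, ds') \<in> Omega n"
    using \<eta> unfolding Omega_iff ds'_def by (cases pre) auto
  have n: "1 \<le> n" and sum: "sum_list ?ds = n"
    using \<eta> by (auto simp: Omega_def)
  have prefix: "\<And>i. i < q \<Longrightarrow> ds' ! i = ?ds ! i"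
    using \<eta>(2) unfolding ds'_def by (simp add: nth_append)
  have psum_q: "psum ?ds (Suc q) = n - 1"
    using psum_append_length[of pre] \<eta>(2) sum by (simp add: psum_Suc nth_append)
  show "vje j (z, ds') = vje j (z, ?ds)" if "j \<in> {1..<n}" for j
  proof (rule vje_cong_prefix)
    from that have j: "1 \<le> j" "j < n" by simp_all
    let ?t = "tidx ?ds j"
    have t: "?t \<le> q" "j \<le> psum ?ds (Suc ?t)"
      using tidx_le[of j ?ds q] tidx_bounds(3)[of j ?ds] j sum psum_q by auto
    show "1 \<le> j" "j \<le> sum_list ?ds" "?t < length ds'"
      using j sum t \<eta>(2) by (auto simp: ds'_def)
    show "ds' ! i = ?ds ! i" if "i < ?t" for i
      using that t prefix by simp
    show "j \<le> psum ds' (Suc ?t)"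
    proof (cases "?t = q")
      case True
      have "psum ds' (Suc q) = n"
        using psum_append_length[of pre] \<eta>(2) sum by (simp add: psum_Suc ds'_def nth_append)
      then show ?thesis using True j by simp
    next
      case False
      have "psum ds' (Suc ?t) = psum ?ds (Suc ?t)"
        using False t(1) prefix by (intro psum_cong) simp
      then show ?thesis
        using t(2) by simp
    qed
  qed
  have "vje n (z, ds') = axis_point ((z = 1) = odd q) (parity_sum ds' (odd q) (Suc q))"
    using \<eta>' \<eta>(2) n by (intro vje_last) (simp_all add: ds'_def)
  moreover have "parity_sum ds' (odd q) (Suc q) = parity_sum ?ds (even (Suc q)) (Suc (Suc q)) + 1"
    using \<eta>(2) parity_sum_cong[OF prefix, where p = "odd q"]
    by (simp add: parity_sum_Suc ds'_def nth_append)
  ultimately show "vje n (z, ds') =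
      axis_point ((z = 1) \<noteq> odd (Suc q)) (parity_sum ?ds (even (Suc q)) (Suc (Suc q)) + 1)"
    by simp
qed

lemma flip_z_unit_block:
  assumes "(z, [0, 1]) \<in> Omega n"
  shows "n = 1" and "(1 - z, [0, 1]) \<in> Omega n" and "1 - z \<noteq> z"
    and "vje n (1 - z, [0, 1]) = axis_point (z \<noteq> 1) 1"
proof -
  show n: "n = 1"
    using assms by (simp add: Omega_def)
  have z: "z \<in> {0, 1}"
    using assms unfolding n by (simp add: Omega_def)
  then show \<eta>': "(1 - z, [0, 1]) \<in> Omega n" and "1 - z \<noteq> z"
    unfolding n by (auto simp: Omega_def)
  have "vje n (1 - z, [0, 1]) =
      axis_point ((1 - z = 1) = odd (1::nat)) (parity_sum [0, 1] (odd (1::nat)) (Suc 1))"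
    using \<eta>' n by (intro vje_last) simp_all
  then show "vje n (1 - z, [0, 1]) = axis_point (z \<noteq> 1) 1"
    using z by (auto simp: parity_sum_Suc numeral_2_eq_2)
qed

lemma exists_Omega_change_last:
  assumes \<eta>: "(z, ds) \<in> Omega n" "length ds = Suc r" "1 \<le> n"
  obtains \<eta>' where "\<eta>' \<in> Omega n" "\<eta>' \<noteq> (z, ds)"
    "\<And>j. j \<in> {1..<n} \<Longrightarrow> vje j \<eta>' = vje j (z, ds)"
    "vje n \<eta>' = axis_point ((z = 1) \<noteq> odd r) (parity_sum ds (even r) (Suc r) + 1)"
proof -
  obtain pre d where ds: "ds = pre @ [d]" and pre: "length pre = r"
    using \<eta>(2) by (cases ds rule: rev_cases) auto
  have r: "1 \<le> r" and d: "1 \<le> d"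
    using Omega_last_block[OF \<eta>] ds pre by auto
  consider (split) "2 \<le> d" | (merge) "d = 1" "2 \<le> r" | (flip) "d = 1" "r = 1"
    using r d by linarith
  then show ?thesis
  proof cases
    case split
    note new = split_last_block[OF \<eta>(1)[unfolded ds] pre split]
    show ?thesis
      by (rule that[OF new(1)]) (use new(2,3) ds pre in auto)
  next
    case merge
    obtain pre' e where pre': "pre = pre' @ [e]" "length pre' = r - 1"
      using pre merge by (cases pre rule: rev_cases) auto
    have ds': "ds = pre' @ [e, 1]" "Suc (r - 1) = r" "1 \<le> r - 1"
      using ds pre' merge by auto
    note new = merge_last_block[OF \<eta>(1)[unfolded ds'(1)] pre'(2) ds'(3), unfolded ds'(2)]
    show ?thesis
      by (rule that[OF new(1)]) (use new(2,3) ds' pre' in auto)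
  next
    case flip
    have "ds = [0, 1]"
      using \<eta>(1) ds pre flip by (cases pre) (auto simp: Omega_def)
    note new = flip_z_unit_block[OF \<eta>(1)[unfolded this]]
    show ?thesis
      by (rule that[OF new(2)])
        (use new(1,3,4) \<open>ds = [0, 1]\<close> flip in \<open>auto simp: parity_sum_Suc numeral_2_eq_2\<close>)
  qed
qed

section \<open>The greedy composition \<open>\<eta>_k\<close>\<close>

text \<open>
  The invariant of the greedy construction: the lattice point \<open>(a + 1, b)\<close> lies on or below,
  and \<open>(a + 1, b + 1)\<close> on or above, the line through the origin of slope \<open>q / p\<close>.
\<close>

definition balanced :: "nat \<Rightarrow> nat \<Rightarrow> nat \<Rightarrow> nat \<Rightarrow> bool" where
  "balanced a b p q \<longleftrightarrow> b * p \<le> (a + 1) * q \<and> (a + 1) * q \<le> (b + 1) * p"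

lemma greedy_step:
  fixes a b p q n :: nat
  assumes q: "0 < q" and room: "a + b < n" and bal: "balanced a b p q"
  defines "d \<equiv> min (n - (a + b)) ((b + 1) * p div q - a)"
  shows "1 \<le> d" and "a + d + b \<le> n"
    and "a + d + b < n \<Longrightarrow> balanced b (a + d) q p"
    and "a + d + b = n \<Longrightarrow> n + 1 = p + q \<Longrightarrow> a + d = p \<and> b + 1 = q"
proof -
  define t where "t = (b + 1) * p div q"
  have t_low: "t * q \<le> (b + 1) * p"
    unfolding t_def by (rule div_times_less_eq_dividend)
  have "(b + 1) * p = t * q + (b + 1) * p mod q" "(b + 1) * p mod q < q"
    unfolding t_def using q by simp_all
  then have t_high: "(b + 1) * p < (t + 1) * q"
    unfolding distrib_right by linarith
  have "a + 1 \<le> t"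
    using bal q unfolding t_def balanced_def by (simp add: less_eq_div_iff_mult_less_eq)
  then show "1 \<le> d" and "a + d + b \<le> n"
    using room unfolding d_def t_def[symmetric] by auto
  show "balanced b (a + d) q p" if "a + d + b < n"
  proof -
    have "a + d = t"
      using that \<open>a + 1 \<le> t\<close> unfolding d_def t_def[symmetric] by auto
    then show ?thesis
      using t_low t_high unfolding balanced_def by simp
  qed
  assume full: "a + d + b = n" and pq: "n + 1 = p + q"
  have "a + d \<le> t"
    using \<open>a + 1 \<le> t\<close> unfolding d_def t_def[symmetric] by auto
  then have "(a + d) * q \<le> (b + 1) * p"
    using t_low mult_le_mono1 order_trans by blast
  moreover have "(a + 1) * q \<le> (a + d) * q"
    using \<open>1 \<le> d\<close> by (intro mult_le_mono1) simp
  then have "b * p \<le> (a + d) * q"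
    using bal unfolding balanced_def by linarith
  ultimately have low: "int (a + d) * int q \<le> int (b + 1) * int p"
    and high: "int b * int p \<le> int (a + d) * int q"
    by (simp_all only: of_nat_mult[symmetric] of_nat_le_iff)
  have A: "int (a + d) = int p + int q - 1 - int b"
    using full pq by simp
  have "(int p + int q) * (int q - 1 - int b) \<le> 0"
    using low unfolding A by (simp add: algebra_simps)
  then have "int q - 1 \<le> int b"
    using q by (simp add: mult_le_0_iff)
  moreover have "(int p + int q) * (int b - int q) < 0"
    using high q unfolding A by (simp add: algebra_simps)
  then have "int b < int q"
    using q by (simp add: mult_less_0_iff)
  ultimately show "a + d = p \<and> b + 1 = q"
    using full pq by linarith
qed

declare dlist.simps(2) [simp del]

lemma Greatest_mult_le_eq_div:
  assumes "(0::nat) < a"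
  shows "(GREATEST m::nat. m * a \<le> x) = x div a"
proof (rule Greatest_equality)
  show "x div a * a \<le> x"
    by (rule div_times_less_eq_dividend)
  show "m \<le> x div a" if "m * a \<le> x" for m
    using that assms by (simp add: less_eq_div_iff_mult_less_eq)
qed

lemma dlist_Suc_eq_snoc: "\<exists>d. dlist n k (Suc l) = dlist n k l @ [d]"
  by (simp only: dlist.simps Let_def) blast

lemma dlist_eq_map_dk: "dlist n k l = map (dk n k) [0..<Suc l]"
proof (induction l)
  case 0
  then show ?case by (simp add: dk_def)
next
  case (Suc l)
  obtain d where d: "dlist n k (Suc l) = dlist n k l @ [d]"
    using dlist_Suc_eq_snoc by blast
  have "dk n k (Suc l) = d"
    unfolding dk_def d Suc.IH by (simp add: nth_append)
  then show ?case
    using d Suc.IH by simp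
qed

lemma dk_0: "dk n k 0 = 0"
  by (simp add: dk_def)

definition block_total :: "nat \<Rightarrow> nat \<Rightarrow> bool \<Rightarrow> nat \<Rightarrow> nat" where
  "block_total n k p l = parity_sum (dlist n k l) p (Suc l)"

definition axis_weight :: "nat \<Rightarrow> nat \<Rightarrow> bool \<Rightarrow> nat" where
  "axis_weight n k b = (if b then k else n + 1 - k)"

lemma fk_lift_axis_point:
  "k \<le> n \<Longrightarrow> fk k (lift n (axis_point b s)) = int s * int (axis_weight n k b)"
  unfolding fk_def lift_def axis_point_def axis_weight_def by (simp add: algebra_simps)

text \<open>
  The points \<open>v_{j,\<eta>_k}\<close> with \<open>j\<close> in block \<open>l\<close> lie on the first axis iff
  \<open>greedy_axis n k l\<close>.
\<close>

definition greedy_axis :: "nat \<Rightarrow> nat \<Rightarrow> nat \<Rightarrow> bool" where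
  "greedy_axis n k l \<longleftrightarrow> (zk n k = 1) = odd l"

lemma length_dlist [simp]: "length (dlist n k l) = Suc l"
  by (simp add: dlist_eq_map_dk del: upt_Suc)

lemma parity_sum_dlist_cong:
  "t \<le> Suc l \<Longrightarrow> t \<le> Suc m \<Longrightarrow> parity_sum (dlist n k l) p t = parity_sum (dlist n k m) p t"
  by (intro parity_sum_cong) (simp add: dlist_eq_map_dk del: upt_Suc)

lemma block_total_0 [simp]: "block_total n k p 0 = 0"
  unfolding block_total_def by (simp add: parity_sum_Suc dk_0[unfolded dk_def])

lemma block_total_Suc:
  "block_total n k p (Suc l) = block_total n k p l + (if odd (Suc l) = p then dk n k (Suc l) else 0)"
  unfolding block_total_def dk_def
  using parity_sum_Suc[of "dlist n k (Suc l)" p "Suc l"] parity_sum_dlist_cong[of "Suc l" "Suc l" l n k p]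
  by simp

lemma sum_list_dlist: "sum_list (dlist n k l) = block_total n k True l + block_total n k False l"
  unfolding block_total_def sum_list_eq_psum psum_eq_parity_sums by simp

lemma sum_dk_eq_block_totals: "(\<Sum>i\<le>l. dk n k i) = block_total n k True l + block_total n k False l"
  by (induction l) (simp_all add: block_total_Suc dk_0)

text \<open>
  The four cases of the recursion for \<open>d_{k,l}\<close> coincide once the running totals are
  indexed by the parity of the last block and the weights by the axis of its points.
\<close>

lemma dk_Suc:
  assumes "1 \<le> k" "k \<le> n"
  shows "dk n k (Suc l) = min (n - (block_total n k (odd l) l + block_total n k (even l) l))
    ((block_total n k (odd l) l + 1) * axis_weight n k (greedy_axis n k l)
       div axis_weight n k (\<not> greedy_axis n k l) - block_total n k (even l) l)"
proof -
  have div_k: "(GREATEST m::nat. m * k \<le> x) = x div k" for x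
    using assms by (intro Greatest_mult_le_eq_div) simp
  have div_k': "(GREATEST m::nat. m * (Suc n - k) \<le> x) = x div (Suc n - k)" for x
    using assms by (intro Greatest_mult_le_eq_div) simp
  have totals: "oddsum (dlist n k l) (Suc l) = block_total n k True l"
      "evensum (dlist n k l) (Suc l) = block_total n k False l"
    unfolding block_total_def oddsum_eq_parity_sum evensum_eq_parity_sum by simp_all
  show ?thesis
    unfolding dk_def dlist.simps(2) Let_def totals sum_list_dlist
    by (cases "zk n k = 1"; cases "odd l")
      (auto simp: nth_append div_k div_k' axis_weight_def greedy_axis_def zk_def add.commute)
qed

lemma greedy_axis_Suc [simp]: "greedy_axis n k (Suc l) \<longleftrightarrow> \<not> greedy_axis n k l"
  unfolding greedy_axis_def by simp

lemma block_totals_Suc: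
  "block_total n k (odd (Suc l)) (Suc l) = block_total n k (even l) l + dk n k (Suc l)"
  "block_total n k (even (Suc l)) (Suc l) = block_total n k (odd l) l"
  by (simp_all add: block_total_Suc)

lemma block_totals_eq_sum_dk:
  "block_total n k (odd l) l + block_total n k (even l) l = (\<Sum>i\<le>l. dk n k i)"
  by (cases "odd l") (simp_all add: sum_dk_eq_block_totals)

lemma etak_eq_dlist: "etak n k = (zk n k, dlist n k (rk n k))"
  unfolding etak_def dlist_eq_map_dk ..

context
  fixes n k :: nat
  assumes k_pos: "1 \<le> k" and k_le: "k \<le> n"
begin

lemma axis_weight_pos: "0 < axis_weight n k b"
  using k_pos k_le by (simp add: axis_weight_def)

lemma axis_weights_sum: "n + 1 = axis_weight n k b + axis_weight n k (\<not> b)"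
  using k_le by (simp add: axis_weight_def)

lemma greedy_Suc:
  assumes room: "block_total n k (odd l) l + block_total n k (even l) l < n"
    and bal: "balanced (block_total n k (even l) l) (block_total n k (odd l) l)
      (axis_weight n k (greedy_axis n k l)) (axis_weight n k (\<not> greedy_axis n k l))"
  defines "last_sum \<equiv> block_total n k (odd (Suc l)) (Suc l)"
    and "other_sum \<equiv> block_total n k (even (Suc l)) (Suc l)"
  shows "1 \<le> dk n k (Suc l)" and "last_sum + other_sum \<le> n"
    and "last_sum + other_sum < n \<Longrightarrow> balanced other_sum last_sum
      (axis_weight n k (greedy_axis n k (Suc l))) (axis_weight n k (\<not> greedy_axis n k (Suc l)))"
    and "last_sum + other_sum = n \<Longrightarrow>
      last_sum = axis_weight n k (\<not> greedy_axis n k (Suc l)) \<and> other_sum + 1 = axis_weight n k (greedy_axis n k (Suc l))"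
proof -
  let ?b = "block_total n k (odd l) l" and ?a = "block_total n k (even l) l"
  let ?p = "axis_weight n k (greedy_axis n k l)" and ?q = "axis_weight n k (\<not> greedy_axis n k l)"
  have d: "dk n k (Suc l) = min (n - (?a + ?b)) ((?b + 1) * ?p div ?q - ?a)"
    using dk_Suc[OF k_pos k_le, of l] by (simp add: add.commute)
  have tot: "last_sum = ?a + dk n k (Suc l)" "other_sum = ?b"
    unfolding last_sum_def other_sum_def block_totals_Suc by simp_all
  note step = greedy_step[OF axis_weight_pos _ bal, of n, folded d]
  show "1 \<le> dk n k (Suc l)" and "last_sum + other_sum \<le> n"
    using step(1,2) room tot by (simp_all add: add.commute)
  show "last_sum + other_sum < n \<Longrightarrow> balanced other_sum last_sum
      (axis_weight n k (greedy_axis n k (Suc l))) (axis_weight n k (\<not> greedy_axis n k (Suc l)))"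
    using step(3) room tot by (simp add: add.commute)
  show "last_sum + other_sum = n \<Longrightarrow>
      last_sum = axis_weight n k (\<not> greedy_axis n k (Suc l)) \<and> other_sum + 1 = axis_weight n k (greedy_axis n k (Suc l))"
    using step(4) room tot axis_weights_sum by (simp add: add.commute)
qed

lemma greedy_invariant:
  "block_total n k (odd l) l + block_total n k (even l) l \<le> n \<and>
    (block_total n k (odd l) l + block_total n k (even l) l < n \<longrightarrow>
      balanced (block_total n k (even l) l) (block_total n k (odd l) l)
        (axis_weight n k (greedy_axis n k l)) (axis_weight n k (\<not> greedy_axis n k l)))"
proof (induction l)
  case 0
  show ?case
    using k_le by (simp add: balanced_def axis_weight_def greedy_axis_def zk_def)
next
  case (Suc l)
  show ?case
  proof (cases "block_total n k (odd l) l + block_total n k (even l) l < n")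
    case True
    then show ?thesis
      using greedy_Suc(2,3)[of l] Suc.IH by auto
  next
    case False
    then have "dk n k (Suc l) = 0"
      using Suc.IH dk_Suc[OF k_pos k_le, of l] by simp
    then show ?thesis
      using Suc.IH False by (simp add: block_total_Suc add.commute)
  qed
qed

lemma dk_Suc_pos:
  "block_total n k (odd l) l + block_total n k (even l) l < n \<Longrightarrow> 1 \<le> dk n k (Suc l)"
  using greedy_Suc(1) greedy_invariant[of l] by simp

lemma block_totals_final:
  assumes "block_total n k (odd l) l + block_total n k (even l) l < n"
    and "block_total n k (odd (Suc l)) (Suc l) + block_total n k (even (Suc l)) (Suc l) = n"
  shows "block_total n k (odd (Suc l)) (Suc l) = axis_weight n k (\<not> greedy_axis n k (Suc l))"
    and "block_total n k (even (Suc l)) (Suc l) + 1 = axis_weight n k (greedy_axis n k (Suc l))"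
  using greedy_Suc(4)[OF assms(1)] greedy_invariant[of l] assms by simp_all

lemma sum_dk_le: "(\<Sum>i\<le>l. dk n k i) \<le> n"
  using greedy_invariant[of l] by (simp add: block_totals_eq_sum_dk)

lemma sum_dk_ge: "min n l \<le> (\<Sum>i\<le>l. dk n k i)"
proof (induction l)
  case (Suc l)
  show ?case
  proof (cases "(\<Sum>i\<le>l. dk n k i) < n")
    case True
    then have "1 \<le> dk n k (Suc l)"
      using dk_Suc_pos by (simp add: block_totals_eq_sum_dk)
    then show ?thesis
      using Suc.IH by simp
  next
    case False
    then show ?thesis
      using sum_dk_le[of l] by simp
  qed
qed simp

lemma sum_dk_rk: "(\<Sum>i\<le>rk n k. dk n k i) = n"
proof -
  have "(\<Sum>i\<le>n. dk n k i) = n"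
    using sum_dk_ge[of n] sum_dk_le[of n] by simp
  then show ?thesis
    unfolding rk_def by (rule LeastI)
qed

lemma sum_dk_less_rk: "l < rk n k \<Longrightarrow> (\<Sum>i\<le>l. dk n k i) < n"
  using not_less_Least[of l "\<lambda>r. (\<Sum>i\<le>r. dk n k i) = n"] sum_dk_le[of l]
  unfolding rk_def by simp

lemma rk_pos: "1 \<le> rk n k"
  using sum_dk_rk k_pos k_le by (cases "rk n k") (simp_all add: dk_0)

lemma etak_in_Omega: "(zk n k, dlist n k (rk n k)) \<in> Omega n"
proof -
  let ?R = "rk n k"
  have split: "dlist n k ?R = 0 # map (dk n k) [1..<Suc ?R]"
    unfolding dlist_eq_map_dk by (simp add: dk_0 upt_conv_Cons del: upt_Suc)
  have "1 \<le> dk n k i" if i: "1 \<le> i" "i \<le> ?R" for i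
  proof -
    obtain l where "i = Suc l" and "l < ?R"
      using i by (cases i) auto
    then show ?thesis
      using dk_Suc_pos[of l] sum_dk_less_rk[of l]
      by (simp add: block_totals_eq_sum_dk)
  qed
  moreover have "sum_list (dlist n k ?R) = n"
    using sum_dk_rk by (simp add: sum_list_dlist sum_dk_eq_block_totals)
  ultimately show ?thesis
    unfolding Omega_iff split by (auto simp: zk_def)
qed

lemma etak_last_block_totals:
  defines "R \<equiv> rk n k"
  shows "block_total n k (odd R) R = axis_weight n k (\<not> greedy_axis n k R)"
    and "block_total n k (even R) R + 1 = axis_weight n k (greedy_axis n k R)"
proof -
  obtain l where R: "R = Suc l"
    using rk_pos unfolding R_def by (cases "rk n k") auto
  have "block_total n k (odd l) l + block_total n k (even l) l < n"
    using sum_dk_less_rk[of l] unfolding R_def[symmetric] R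
    by (simp add: block_totals_eq_sum_dk)
  moreover have "block_total n k (odd R) R + block_total n k (even R) R = n"
    using sum_dk_rk unfolding R_def by (simp add: block_totals_eq_sum_dk)
  ultimately show "block_total n k (odd R) R = axis_weight n k (\<not> greedy_axis n k R)"
    and "block_total n k (even R) R + 1 = axis_weight n k (greedy_axis n k R)"
    using block_totals_final[of l] unfolding R by simp_all
qed

end

theorem corollary3p9:
  fixes n k :: nat
  assumes "1 \<le> n" and "1 \<le> k" and "k \<le> n"
  shows "\<exists>\<eta>\<in>Omega n. \<eta> \<noteq> etak n k \<and>
           fk k (mJ n (Jeta n \<eta>)) = fk k (mJ n (Jeta n (etak n k)))"
proof -
  define R where "R = rk n k"
  define ds where "ds = dlist n k R"
  define b where "b = greedy_axis n k R"
  have \<eta>: "(zk n k, ds) \<in> Omega n" "length ds = Suc R"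
    unfolding ds_def R_def using etak_in_Omega[OF assms(2,3)] by simp_all
  obtain \<eta>' where \<eta>': "\<eta>' \<in> Omega n" "\<eta>' \<noteq> (zk n k, ds)"
    "\<And>j. j \<in> {1..<n} \<Longrightarrow> vje j \<eta>' = vje j (zk n k, ds)"
    "vje n \<eta>' = axis_point ((zk n k = 1) \<noteq> odd R) (parity_sum ds (even R) (Suc R) + 1)"
    using exists_Omega_change_last[OF \<eta> assms(1)] by blast
  have old: "vje n (zk n k, ds) = axis_point b (axis_weight n k (\<not> b))"
    using vje_last[OF \<eta> assms(1)] etak_last_block_totals(1)[OF assms(2,3)]
    unfolding b_def greedy_axis_def block_total_def ds_def R_def by simp
  have new: "vje n \<eta>' = axis_point (\<not> b) (axis_weight n k b)"
    using \<eta>'(4) etak_last_block_totals(2)[OF assms(2,3)]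
    unfolding b_def greedy_axis_def block_total_def ds_def R_def by simp
  have "fk k (mJ n (Jeta n \<eta>')) - fk k (mJ n (Jeta n (zk n k, ds))) =
      fk k (lift n (vje n \<eta>')) - fk k (lift n (vje n (zk n k, ds)))"
    using fk_mJ_Jeta_change_last[OF \<eta> assms(1) \<eta>'(3,4)] .
  also have "\<dots> = 0"
    unfolding old new fk_lift_axis_point[OF assms(3)] by simp
  finally show ?thesis
    using \<eta>'(1,2) etak_eq_dlist unfolding ds_def R_def by auto
qed

end
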